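(* For $\tau\in\mathbb{R}$, $$\mu_0(\tau;\tfrac13):=\int_{-\infty}^{\infty}\exp\left\{-\left(x^6-\tau x^4+\tfrac13\tau^2x^2\right)\right\}dx$$ is given by $$\mu_0(\tau;\tfrac13)=\left\{\tfrac13\Gamma\!\left(\tfrac16\right)\,{}_2F_2\!\left(\tfrac16,\tfrac12;\tfrac13,\tfrac23;\tfrac{\tau^3}{27}\right)+\tfrac13\tau\Gamma\!\left(\tfrac56\right){}_2F_2\!\left(\tfrac12,\tfrac56;\tfrac23,\tfrac43;\tfrac{\tau^3}{27}\right)-\frac{\tau^2\sqrt{\pi}}{36}\,{}_2F_2\!\left(\tfrac56,\tfrac76;\tfrac43,\tfrac53;\tfrac{\tau^3}{27}\right)\right\}\exp\left(-\frac{\tau^3}{27}\right).$$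
   Context: ${}_2F_2(a_1,a_2;b_1,b_2;z)$ denotes the generalised hypergeometric function with upper parameters $a_1,a_2$ and lower parameters $b_1,b_2$. *)

theory Defs
  imports "HOL-Analysis.Analysis"
begin

definition hyp2F2 :: "real \<Rightarrow> real \<Rightarrow> real \<Rightarrow> real \<Rightarrow> real \<Rightarrow> real" where
  "hyp2F2 a1 a2 b1 b2 z =
     (\<Sum>n. (pochhammer a1 n * pochhammer a2 n) / (pochhammer b1 n * pochhammer b2 n)
            * z ^ n / fact n)"

end

(*
  With s = tau/3 the exponent is s^3 + (x^2 - s)^3, so it suffices to expand
  J(s) = int exp (-(x^2 - s)^3) dx in powers of s.  Writing the n-th derivative of exp (-y^3) as
  P_n(y) exp (-y^3), the Taylor coefficients of the integrand are P_n(x^2) exp (-x^6) (-s)^n / n!,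
  and Cauchy's estimate bounds them by a geometric sequence times an integrable function, so the
  series may be integrated termwise.  The integral of P_n(x^2) exp (-x^6) follows from the moments
  int x^(2j) exp (-x^6) dx = Gamma ((2j+1)/6) / 3 and the recursion P_(n+1) = P_n' - 3 y^2 P_n:
  together with Gamma (a + 1) = a Gamma a it equals (1/2)_n Gamma ((1-2n)/6) / 3.  The resulting
  coefficients of s^n and s^(n+3) differ by a rational factor in n, so the three residue classes
  of n mod 3 give the three 2F2 series.
*)

theory Submission
  imports Defs "HOL-Complex_Analysis.Complex_Analysis"
begin

section \<open>Derivatives of exp (-z^3)\<close>

definition exp_cube_step :: "real poly \<Rightarrow> real poly" where
  "exp_cube_step p = pderiv p - smult 3 (monom 1 2 * p)"

definition exp_cube_poly :: "nat \<Rightarrow> real poly" where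
  "exp_cube_poly n = (exp_cube_step ^^ n) 1"

lemma exp_cube_poly_0 [simp]: "exp_cube_poly 0 = 1"
  and exp_cube_poly_Suc [simp]: "exp_cube_poly (Suc n) = exp_cube_step (exp_cube_poly n)"
  by (simp_all add: exp_cube_poly_def)

lemma map_poly_of_real_exp_cube_step:
  "map_poly complex_of_real (exp_cube_step p) =
     pderiv (map_poly of_real p) - smult 3 (monom 1 2 * map_poly of_real p)"
  by (rule poly_eqI) (simp add: exp_cube_step_def coeff_map_poly coeff_pderiv coeff_monom_mult)

lemma poly_map_poly_of_real:
  "poly (map_poly of_real p) (of_real x) = (of_real (poly p x) :: 'a::{real_algebra_1,comm_ring})"
  by (induction p) (simp_all add: map_poly_pCons)

lemma higher_deriv_exp_neg_cube:
  "(deriv ^^ n) (\<lambda>z. exp (-(z^3))) =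
     (\<lambda>z::complex. poly (map_poly of_real (exp_cube_poly n)) z * exp (-(z^3)))"
proof (induction n)
  case (Suc n)
  have "((\<lambda>z. poly (map_poly of_real (exp_cube_poly n)) z * exp (-(z^3))) has_field_derivative
          poly (map_poly of_real (exp_cube_poly (Suc n))) z * exp (-(z^3))) (at z)" for z :: complex
    by (rule derivative_eq_intros refl poly_DERIV | simp)+
       (simp add: map_poly_of_real_exp_cube_step poly_monom algebra_simps power2_eq_square)
  then show ?case
    by (simp add: Suc.IH fun_eq_iff DERIV_imp_deriv del: exp_cube_poly_Suc)
qed simp

lemma exp_neg_cube_taylor:
  fixes y s :: real
  shows "(\<lambda>n. poly (exp_cube_poly n) y * exp (-(y^3)) * (-s)^n / fact n) sums exp (-((y - s)^3))"
proof -
  have "(\<lambda>n. (deriv ^^ n) (\<lambda>z. exp (-(z^3))) (complex_of_real y) / fact n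
               * (of_real (y - s) - of_real y)^n) sums exp (-(of_real (y - s) ^ 3))"
    by (rule holomorphic_power_series[where r = "\<bar>s\<bar> + 1"]) (auto intro!: holomorphic_intros)
  then have "(\<lambda>n. complex_of_real (poly (exp_cube_poly n) y * exp (-(y^3)) * (-s)^n / fact n))
               sums of_real (exp (-((y - s)^3)))"
    by (simp add: higher_deriv_exp_neg_cube poly_map_poly_of_real exp_of_real[symmetric])
  then show ?thesis
    by (simp only: sums_of_real_iff)
qed

lemma norm_cube_diff_le:
  fixes x :: complex and y r :: real
  assumes "0 \<le> y" "norm (x - of_real y) \<le> r"
  shows "norm (x^3 - of_real (y^3)) \<le> (y + r)^3 - y^3"
proof -
  define d where "d = x - of_real y"
  have "x^3 - of_real (y^3) = of_real (3 * y^2) * d + of_real (3 * y) * d^2 + d^3"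
    by (simp add: d_def algebra_simps power2_eq_square power3_eq_cube)
  also have "norm \<dots> \<le> 3 * y^2 * r + 3 * y * r^2 + r^3"
    using assms
    by (intro norm_triangle_le add_mono)
       (auto simp: d_def norm_mult norm_power intro!: mult_left_mono power_mono)
  also have "\<dots> = (y + r)^3 - y^3"
    by (simp add: algebra_simps power2_eq_square power3_eq_cube)
  finally show ?thesis .
qed

lemma exp_cube_poly_bound:
  fixes y r :: real
  assumes "0 \<le> y" "0 < r"
  shows "\<bar>poly (exp_cube_poly n) y\<bar> * exp (-(y^3)) \<le> fact n * exp ((y + r)^3 - 2 * y^3) / r^n"
proof -
  have "norm ((deriv ^^ n) (\<lambda>z. exp (-(z^3))) (complex_of_real y))
          \<le> fact n * exp ((y + r)^3 - 2 * y^3) / r^n"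
  proof (rule Cauchy_inequality)
    fix x :: complex
    assume "norm (of_real y - x) = r"
    then have "norm (x^3 - of_real (y^3)) \<le> (y + r)^3 - y^3"
      using assms by (intro norm_cube_diff_le) (simp_all add: norm_minus_commute)
    then have "- Re (x^3) \<le> (y + r)^3 - 2 * y^3"
      using abs_Re_le_cmod[of "x^3 - of_real (y^3)"] by simp
    then show "norm (exp (-(x^3))) \<le> exp ((y + r)^3 - 2 * y^3)"
      by simp
  qed (use assms in \<open>auto intro!: holomorphic_intros holomorphic_on_imp_continuous_on\<close>)
  then show ?thesis
    by (simp add: higher_deriv_exp_neg_cube poly_map_poly_of_real norm_mult
                  exp_of_real[symmetric] del: of_real_power)
qed

lemma cube_shift_bound:
  fixes y r :: real
  assumes "0 \<le> y" "0 \<le> r"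
  shows "(y + r)^3 - 2 * y^3 \<le> 13^3 * r^3 - y^3 / 2"
proof -
  have y3: "0 \<le> y^3" and r3: "0 \<le> 13^3 * r^3"
    using assms by simp_all
  show ?thesis
  proof (cases "y \<le> 12 * r")
    case True
    then have "(y + r)^3 \<le> (13 * r)^3"
      using assms by (intro power_mono) auto
    then show ?thesis
      using y3 unfolding power_mult_distrib by linarith
  next
    case False
    then have "(y + r)^3 \<le> (13 / 12 * y)^3"
      using assms by (intro power_mono) auto
    also have "\<dots> \<le> 3/2 * y^3"
      unfolding power_mult_distrib using assms by (intro mult_right_mono) (auto simp: power_divide)
    finally show ?thesis
      using r3 by linarith
  qed
qed

section \<open>Moments of exp (-x^6)\<close>

(* The integral of x^(2k) exp (-x^6) for k \<ge> 0; the values at negative k enter the coefficients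
   of the final series. *)
definition sextic_moment :: "int \<Rightarrow> real" where
  "sextic_moment k = Gamma (of_int (2 * k + 1) / 6) / 3"

lemma sextic_moment_rec: "3 * sextic_moment (k + 3) = (of_int k + 1/2) * sextic_moment k"
proof -
  have "of_int (2 * k + 1) / 6 \<notin> (\<int>\<^sub>\<le>\<^sub>0 :: real set)"
  proof
    assume "of_int (2 * k + 1) / 6 \<in> (\<int>\<^sub>\<le>\<^sub>0 :: real set)"
    then obtain n where "of_int (2 * k + 1) / 6 = (of_int n :: real)"
      by (auto elim!: nonpos_Ints_cases)
    then have "of_int (2 * k + 1) = (of_int (6 * n) :: real)"
      by simp
    then have "2 * k + 1 = 6 * n"
      by (simp only: of_int_eq_iff)
    then show False
      by presburger
  qed
  then have Gamma: "Gamma (of_int (2 * k + 1) / 6 + 1)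
      = of_int (2 * k + 1) / 6 * Gamma (of_int (2 * k + 1) / 6 :: real)"
    by (rule Gamma_plus1)
  have shift: "of_int (2 * (k + 3) + 1) / 6 = of_int (2 * k + 1) / 6 + (1 :: real)"
    by simp
  show ?thesis
    unfolding sextic_moment_def shift Gamma by (simp add: field_simps)
qed

lemma power_mult_powr_power:
  fixes x :: real and j k :: nat
  assumes "0 < k" "0 < x"
  shows "x^(k - 1) * (x^k) powr (real (j + 1) / k - 1) = x^j"
proof -
  have "(x^k) powr (real (j + 1) / k - 1) = x powr (real k * (real (j + 1) / k - 1))"
    using assms by (simp add: powr_realpow[symmetric] powr_powr)
  also have "real k * (real (j + 1) / k - 1) = real j + 1 - real k"
    using assms by (simp add: field_simps)
  moreover have "x^(k - 1) = x powr real (k - 1)"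
    using assms(2) by (rule powr_realpow[symmetric])
  ultimately have "x^(k - 1) * (x^k) powr (real (j + 1) / k - 1)
      = x powr (real (k - 1) + (real j + 1 - real k))"
    by (simp add: powr_add)
  also have "\<dots> = x^j"
    using assms by (simp add: of_nat_diff powr_realpow)
  finally show ?thesis .
qed

lemma has_integral_substitution_power:
  fixes f :: "real \<Rightarrow> real" and k :: nat
  assumes "0 < k" "\<And>t. 0 \<le> t \<Longrightarrow> 0 \<le> f t" "(f has_integral I) {0..}"
  shows "((\<lambda>x. k * x^(k - 1) * f (x^k)) has_integral I) {0..}"
proof -
  have "f absolutely_integrable_on {0..}"
    using assms(2,3) by (intro nonnegative_absolutely_integrable_1) (auto simp: has_integral_integrable)
  moreover have image: "(\<lambda>x. x^k) ` {0..} = {0::real..}"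
  proof (intro equalityI subsetI)
    fix t :: real
    assume "t \<in> {0..}"
    then show "t \<in> (\<lambda>x. x^k) ` {0..}"
      using assms by (intro image_eqI[of _ _ "root k t"]) (simp_all add: real_root_pow_pos2)
  qed auto
  moreover have inj: "inj_on (\<lambda>x::real. x^k) {0..}"
  proof (rule inj_onI)
    fix x y :: real
    assume "x \<in> {0..}" "y \<in> {0..}" "x^k = y^k"
    then show "x = y"
      using assms by (intro power_eq_imp_eq_base[of x k y]) auto
  qed
  moreover have deriv: "((\<lambda>x. x^k) has_field_derivative k * x^(k - 1)) (at x within {0..})"
    for x :: real
    by (auto intro!: derivative_eq_intros)
  ultimately have "(\<lambda>x. \<bar>k * x^(k - 1)\<bar> * f (x^k)) absolutely_integrable_on {0..}
      \<and> integral {0..} (\<lambda>x. \<bar>k * x^(k - 1)\<bar> * f (x^k)) = I"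
    using has_absolute_integral_change_of_variables_1'[OF _ deriv inj, of f I]
    by (simp add: image integral_unique[OF assms(3)])
  then have "((\<lambda>x. \<bar>k * x^(k - 1)\<bar> * f (x^k)) has_integral I) {0..}"
    by (simp add: absolutely_integrable_on_def has_integral_integrable_integral)
  then show ?thesis
    by (rule has_integral_eq[rotated]) (simp add: abs_mult)
qed

lemma has_integral_power_mult_exp_neg_power:
  fixes j k :: nat
  assumes "0 < k"
  shows "((\<lambda>x::real. x^j * exp (-(x^k))) has_integral Gamma (real (j + 1) / k) / k) {0..}"
proof -
  define a where "a = real (j + 1) / k"
  define f where "f t = t powr (a - 1) / exp t" for t :: real
  have "0 < a"
    using assms by (simp add: a_def)
  then have "(f has_integral Gamma a) {0..}"
    unfolding f_def by (rule Gamma_integral_real)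
  then have "((\<lambda>x. k * x^(k - 1) * f (x^k)) has_integral Gamma a) {0..}"
    by (rule has_integral_substitution_power[OF assms, rotated]) (simp add: f_def)
  then have "((\<lambda>x. k * (x^j * exp (-(x^k)))) has_integral Gamma a) {0..}"
  proof (rule has_integral_spike[OF negligible_sing[of 0], rotated])
    fix x :: real
    assume "x \<in> {0..} - {0}"
    then have "0 < x"
      by simp
    have "k * x^(k - 1) * f (x^k) = k * (x^(k - 1) * (x^k) powr (a - 1)) / exp (x^k)"
      by (simp add: f_def)
    also have "x^(k - 1) * (x^k) powr (a - 1) = x^j"
      unfolding a_def using assms \<open>0 < x\<close> by (rule power_mult_powr_power)
    also have "k * x^j / exp (x^k) = k * (x^j * exp (-(x^k)))"
      by (simp add: exp_minus divide_inverse)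
    finally show "k * (x^j * exp (-(x^k))) = k * x^(k - 1) * f (x^k)" ..
  qed
  from has_integral_mult_right[OF this, of "1 / k"] show ?thesis
    using assms by (simp add: a_def)
qed

lemma has_bochner_integral_even_nonneg:
  fixes f :: "real \<Rightarrow> real"
  assumes "f \<in> borel_measurable lborel" "\<And>x. f (-x) = f x" "\<And>x. 0 \<le> f x"
    and "(f has_integral I) {0..}"
  shows "has_bochner_integral lborel f (2 * I)"
proof -
  have "has_bochner_integral lborel (\<lambda>x. indicator {0..} x *\<^sub>R f x) I"
  proof (rule has_bochner_integral_nn_integral)
    show "(\<lambda>x. indicator {0..} x *\<^sub>R f x) \<in> borel_measurable lborel"
      using assms(1) by (intro borel_measurable_scaleR) auto
    show "AE x in lborel. 0 \<le> indicator {0..} x *\<^sub>R f x"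
      by (intro AE_I2) (simp add: assms(3))
    show "0 \<le> I"
      using assms(4) by (rule has_integral_nonneg) (use assms(3) in auto)
    show "(\<integral>\<^sup>+x. ennreal (indicator {0..} x *\<^sub>R f x) \<partial>lborel) = ennreal I"
      using nn_integral_has_integral_lebesgue[of "{0..}" f I] assms(3,4) by simp
  qed
  from has_bochner_integral_even_function[OF this assms(2)] show ?thesis
    by simp
qed

lemma has_bochner_integral_sextic_moment:
  "has_bochner_integral lborel (\<lambda>x::real. x^(2 * i) * exp (-(x^6))) (sextic_moment (int i))"
proof -
  have "has_bochner_integral lborel (\<lambda>x::real. x^(2 * i) * exp (-(x^6)))
          (2 * (Gamma (real (2 * i + 1) / 6) / 6))"
  proof (rule has_bochner_integral_even_nonneg)
    show "(\<lambda>x::real. x^(2 * i) * exp (-(x^6))) \<in> borel_measurable lborel"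
      by measurable
    show "((\<lambda>x::real. x^(2 * i) * exp (-(x^6))) has_integral Gamma (real (2 * i + 1) / 6) / 6)
        {0..}"
      using has_integral_power_mult_exp_neg_power[of 6 "2 * i"]
      by (simp only: zero_less_numeral of_nat_numeral)
  qed simp_all
  then show ?thesis
    by (simp add: sextic_moment_def add.commute)
qed

lemma exp_cube_step_add: "exp_cube_step (p + q) = exp_cube_step p + exp_cube_step q"
  by (simp add: exp_cube_step_def pderiv_add smult_add_right distrib_left)

lemma exp_cube_step_sum: "exp_cube_step (\<Sum>i\<in>A. f i) = (\<Sum>i\<in>A. exp_cube_step (f i))"
  by (induction A rule: infinite_finite_induct)
     (simp_all add: exp_cube_step_add exp_cube_step_def[of 0])

lemma exp_cube_step_monom:
  "exp_cube_step (monom c i) = monom (of_nat i * c) (i - 1) - monom (3 * c) (i + 2)"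
  by (simp add: exp_cube_step_def pderiv_monom smult_monom mult_monom)

(* moment_functional m p formally integrates p(x^2) x^(-2m) exp (-x^6); only m = 0 is a genuine
   integral (has_bochner_integral_poly_sextic); the shift m is what makes the induction in
   moment_functional_exp_cube_poly go through. *)
definition moment_functional :: "int \<Rightarrow> real poly \<Rightarrow> real" where
  "moment_functional m p = (\<Sum>j\<le>degree p. coeff p j * sextic_moment (int j - m))"

lemma moment_functional_eq_sum:
  assumes "degree p \<le> N"
  shows "moment_functional m p = (\<Sum>j\<le>N. coeff p j * sextic_moment (int j - m))"
  unfolding moment_functional_def using assms
  by (intro sum.mono_neutral_left) (auto simp: coeff_eq_0)

lemma moment_functional_add:
  "moment_functional m (p + q) = moment_functional m p + moment_functional m q"
  using degree_add_le_max[of p q]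
  by (simp add: moment_functional_eq_sum[of _ "max (degree p) (degree q)"] sum.distrib algebra_simps)

lemma moment_functional_diff:
  "moment_functional m (p - q) = moment_functional m p - moment_functional m q"
  using degree_diff_le_max[of p q]
  by (simp add: moment_functional_eq_sum[of _ "max (degree p) (degree q)"] sum_subtractf
                algebra_simps)

lemma moment_functional_sum:
  "moment_functional m (\<Sum>i\<in>A. f i) = (\<Sum>i\<in>A. moment_functional m (f i))"
  by (induction A rule: infinite_finite_induct)
     (simp_all add: moment_functional_add moment_functional_def[of _ 0])

lemma moment_functional_monom: "moment_functional m (monom c i) = c * sextic_moment (int i - m)"
  by (subst moment_functional_eq_sum[of _ i])
     (simp_all add: degree_monom_le if_distrib[of "\<lambda>x. x * _"] cong: if_cong)

(* Integration by parts, with Gamma's functional equation in place of the boundary terms. *)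
lemma moment_functional_exp_cube_step_monom:
  "moment_functional m (exp_cube_step (monom c i))
     = (of_int m + 1/2) * moment_functional (m + 1) (monom c i)"
proof -
  define k where "k = int i - (m + 1)"
  have "moment_functional m (exp_cube_step (monom c i))
      = c * (of_nat i * sextic_moment (int (i - 1) - m) - 3 * sextic_moment (k + 3))"
    by (simp add: k_def exp_cube_step_monom moment_functional_diff moment_functional_monom
                  algebra_simps)
  also have "of_nat i * sextic_moment (int (i - 1) - m) = of_nat i * sextic_moment k"
    by (cases i) (simp_all add: k_def)
  also have "3 * sextic_moment (k + 3) = (of_int k + 1/2) * sextic_moment k"
    by (rule sextic_moment_rec)
  also have "c * (of_nat i * sextic_moment k - (of_int k + 1/2) * sextic_moment k)
      = (of_int m + 1/2) * (c * sextic_moment k)"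
    by (simp add: k_def algebra_simps)
  finally show ?thesis
    by (simp add: k_def moment_functional_monom)
qed

lemma moment_functional_exp_cube_step:
  "moment_functional m (exp_cube_step p) = (of_int m + 1/2) * moment_functional (m + 1) p"
  by (subst (1 2) poly_as_sum_of_monoms[symmetric])
     (simp add: exp_cube_step_sum moment_functional_sum moment_functional_exp_cube_step_monom
                sum_distrib_left)

lemma moment_functional_exp_cube_poly:
  "moment_functional m (exp_cube_poly k) = pochhammer (of_int m + 1/2) k * sextic_moment (-(m + k))"
proof (induction k arbitrary: m)
  case 0
  show ?case
    by (simp add: moment_functional_def)
next
  case (Suc k)
  then show ?case
    by (simp add: moment_functional_exp_cube_step pochhammer_rec algebra_simps)
qed

lemma has_bochner_integral_poly_sextic:
  "has_bochner_integral lborel (\<lambda>x. poly p (x^2) * exp (-(x^6))) (moment_functional 0 p)"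
proof -
  have "(\<lambda>x. poly p (x^2) * exp (-(x^6)))
      = (\<lambda>x. \<Sum>j\<le>degree p. coeff p j * (x^(2 * j) * exp (-(x^6))))"
    by (simp add: poly_altdef sum_distrib_right power_mult mult.assoc)
  then show ?thesis
    by (simp add: moment_functional_def has_bochner_integral_sum has_bochner_integral_mult_right
                  has_bochner_integral_sextic_moment)
qed

section \<open>Termwise integration\<close>

definition cube_shift_term :: "real \<Rightarrow> nat \<Rightarrow> real" where
  "cube_shift_term s n = (-s)^n / fact n * pochhammer (1/2) n * sextic_moment (- int n)"

definition cube_shift_ratio :: "real \<Rightarrow> real" where
  "cube_shift_ratio x = 3 * (x + 1/2) * (x + 3/2) / ((x + 1) * (x + 2) * (x + 3))"

lemma sums_integral_geometric_bound:
  fixes f :: "nat \<Rightarrow> 'a \<Rightarrow> real"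
  assumes f: "\<And>n. integrable M (f n)" and g: "integrable M g"
    and bound: "\<And>n x. \<bar>f n x\<bar> \<le> g x * q^n" and q: "0 \<le> q" "q < 1"
  shows "(\<lambda>n. integral\<^sup>L M (f n)) sums (\<integral>x. (\<Sum>n. f n x) \<partial>M)"
    and "\<bar>integral\<^sup>L M (f n)\<bar> \<le> integral\<^sup>L M g * q^n"
proof -
  have geometric: "summable (\<lambda>n. c * q^n)" for c :: real
    using q by (intro summable_mult summable_geometric) simp
  have norm_bound: "(\<integral>x. norm (f n x) \<partial>M) \<le> integral\<^sup>L M g * q^n" for n
  proof -
    have "(\<integral>x. norm (f n x) \<partial>M) \<le> (\<integral>x. g x * q^n \<partial>M)"
      using f g bound by (intro integral_mono integrable_norm integrable_mult_left) auto
    then show ?thesis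
      by simp
  qed
  show "(\<lambda>n. integral\<^sup>L M (f n)) sums (\<integral>x. (\<Sum>n. f n x) \<partial>M)"
  proof (rule sums_integral[OF f])
    show "AE x in M. summable (\<lambda>n. norm (f n x))"
      using bound by (intro AE_I2 summable_comparison_test'[OF geometric]) auto
    show "summable (\<lambda>n. \<integral>x. norm (f n x) \<partial>M)"
      using norm_bound by (intro summable_comparison_test'[OF geometric]) auto
  qed
  have "norm (integral\<^sup>L M (f n)) \<le> integral\<^sup>L M g * q^n"
    using integral_norm_bound norm_bound by (rule order_trans)
  then show "\<bar>integral\<^sup>L M (f n)\<bar> \<le> integral\<^sup>L M g * q^n"
    by simp
qed

lemma integrable_exp_neg_half_sextic: "integrable lborel (\<lambda>x::real. exp (-(x^6) / 2))"
proof -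
  define c :: real where "c = root 6 (1/2)"
  have "integrable lborel (\<lambda>x::real. exp (-(x^6)))"
    using has_bochner_integral_sextic_moment[of 0] by (simp add: has_bochner_integral_iff)
  then have "integrable lborel (\<lambda>x. exp (-((0 + c * x)^6)))"
    by (rule lborel_integrable_real_affine) (simp add: c_def)
  moreover have "(c * x)^6 = x^6 / 2" for x
    by (simp add: c_def power_mult_distrib real_root_pow_pos2)
  ultimately show ?thesis
    by simp
qed

lemma integrable_exp_cube_shift_bound:
  fixes r :: real
  assumes "0 \<le> r"
  shows "integrable lborel (\<lambda>x::real. exp ((x^2 + r)^3 - 2 * x^6))"
proof (rule Bochner_Integration.integrable_bound)
  show "integrable lborel (\<lambda>x::real. exp (13^3 * r^3) * exp (-(x^6) / 2))"
    by (intro integrable_mult_right integrable_exp_neg_half_sextic)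
  show "(\<lambda>x::real. exp ((x^2 + r)^3 - 2 * x^6)) \<in> borel_measurable lborel"
    by measurable
  show "AE x in lborel. norm (exp ((x^2 + r)^3 - 2 * x^6))
      \<le> norm (exp (13^3 * r^3) * exp (-(x^6) / 2))"
  proof (rule AE_I2)
    fix x :: real
    have "(x^2 + r)^3 - 2 * (x^2)^3 \<le> 13^3 * r^3 - (x^2)^3 / 2"
      using assms by (intro cube_shift_bound) auto
    then show "norm (exp ((x^2 + r)^3 - 2 * x^6)) \<le> norm (exp (13^3 * r^3) * exp (-(x^6) / 2))"
      by (simp flip: power_mult exp_add)
  qed
qed

lemma exp_cube_poly_term_bound:
  fixes y s r :: real
  assumes "0 \<le> y" "0 < r"
  shows "\<bar>poly (exp_cube_poly n) y * exp (-(y^3)) * (-s)^n / fact n\<bar>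
    \<le> exp ((y + r)^3 - 2 * y^3) * (\<bar>s\<bar> / r)^n"
proof -
  have "\<bar>poly (exp_cube_poly n) y * exp (-(y^3)) * (-s)^n / fact n\<bar>
      = \<bar>poly (exp_cube_poly n) y\<bar> * exp (-(y^3)) * (\<bar>s\<bar>^n / fact n)"
    by (simp add: abs_mult power_abs)
  also have "\<dots> \<le> fact n * exp ((y + r)^3 - 2 * y^3) / r^n * (\<bar>s\<bar>^n / fact n)"
    using exp_cube_poly_bound[OF assms] by (rule mult_right_mono) simp
  also have "\<dots> = exp ((y + r)^3 - 2 * y^3) * (\<bar>s\<bar> / r)^n"
    by (simp add: power_divide)
  finally show ?thesis .
qed

lemma
  fixes s :: real
  shows sums_cube_shift_term: "cube_shift_term s sums (LBINT x. exp (-((x^2 - s)^3)))"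
    and cube_shift_term_geometric_bound: "\<exists>C. \<forall>n. \<bar>cube_shift_term s n\<bar> \<le> C * (1/2)^n"
proof -
  define r where "r = 2 * \<bar>s\<bar> + 1"
  define f where "f = (\<lambda>n x::real. poly (exp_cube_poly n) (x^2) * exp (-(x^6)) * (-s)^n / fact n)"
  have "0 < r" "\<bar>s\<bar> / r \<le> 1/2"
    by (simp_all add: r_def field_simps add_nonneg_pos)
  have f_integral: "has_bochner_integral lborel (f n) (cube_shift_term s n)" for n
  proof -
    have "has_bochner_integral lborel
        (\<lambda>x. (-s)^n / fact n * (poly (exp_cube_poly n) (x^2) * exp (-(x^6))))
        ((-s)^n / fact n * moment_functional 0 (exp_cube_poly n))"
      by (intro has_bochner_integral_mult_right has_bochner_integral_poly_sextic)
    then show ?thesis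
      by (simp add: f_def cube_shift_term_def moment_functional_exp_cube_poly ac_simps)
  qed
  have f_bound: "\<bar>f n x\<bar> \<le> exp ((x^2 + r)^3 - 2 * x^6) * (1/2)^n" for n x
  proof -
    have "\<bar>f n x\<bar> \<le> exp ((x^2 + r)^3 - 2 * x^6) * (\<bar>s\<bar> / r)^n"
      using exp_cube_poly_term_bound[of "x^2" r n s] \<open>0 < r\<close> by (simp add: f_def)
    also have "\<dots> \<le> exp ((x^2 + r)^3 - 2 * x^6) * (1/2)^n"
      using \<open>\<bar>s\<bar> / r \<le> 1/2\<close> \<open>0 < r\<close> by (intro mult_left_mono power_mono) auto
    finally show ?thesis .
  qed
  have f_sum: "(\<Sum>n. f n x) = exp (-((x^2 - s)^3))" for x
    using exp_neg_cube_taylor[of "x^2" s] by (simp add: f_def sums_iff flip: power_mult)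
  note geometric =
    sums_integral_geometric_bound[of lborel f, OF _ integrable_exp_cube_shift_bound f_bound]
  show "cube_shift_term s sums (LBINT x. exp (-((x^2 - s)^3)))"
    using geometric(1) f_integral \<open>0 < r\<close> by (simp add: f_sum has_bochner_integral_iff)
  show "\<exists>C. \<forall>n. \<bar>cube_shift_term s n\<bar> \<le> C * (1/2)^n"
    using geometric(2) f_integral \<open>0 < r\<close> by (auto simp: has_bochner_integral_iff)
qed

lemma summable_cube_shift_term_residue: "summable (\<lambda>m. cube_shift_term s (3 * m + r))"
proof -
  obtain C where C: "\<And>n. \<bar>cube_shift_term s n\<bar> \<le> C * (1/2)^n"
    using cube_shift_term_geometric_bound by blast
  have "\<bar>cube_shift_term s 0\<bar> \<le> C"
    using C[of 0] by simp
  then have "0 \<le> C"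
    by (rule order_trans[OF abs_ge_zero])
  have "\<bar>cube_shift_term s (3 * m + r)\<bar> \<le> C * (1/2)^m" for m
  proof -
    have "(1/2 :: real)^(3 * m + r) \<le> (1/2)^m"
      by (rule power_decreasing) auto
    then show ?thesis
      using C[of "3 * m + r"] \<open>0 \<le> C\<close> by (meson mult_left_mono order_trans)
  qed
  then show ?thesis
    by (intro summable_comparison_test'[OF summable_mult[OF summable_geometric]]) auto
qed

lemma cube_shift_term_add_3:
  "cube_shift_term s (n + 3) = cube_shift_term s n * (s^3 * cube_shift_ratio n)"
proof -
  define c where "c = real n + 5/2"
  define Q where "Q = (real n + 1/2) * (real n + 3/2)"
  define D where "D = (real n + 1) * (real n + 2) * (real n + 3)"
  have "D \<noteq> 0"
    by (simp add: D_def)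
  have "c \<noteq> 0"
    by (simp add: c_def add_nonneg_pos)
  have "3 * sextic_moment (- int n) = - c * sextic_moment (- int (n + 3))"
    using sextic_moment_rec[of "- int (n + 3)"] by (simp add: c_def algebra_simps)
  then have moment: "sextic_moment (- int (n + 3)) = - 3 * sextic_moment (- int n) / c"
    using \<open>c \<noteq> 0\<close> by (simp add: field_simps)
  have pochhammer: "pochhammer (1/2) (n + 3) = pochhammer (1/2) n * (Q * c)"
    by (simp add: Q_def c_def pochhammer_Suc numeral_3_eq_3 field_simps)
  have fact: "fact (n + 3) = fact n * D"
    by (simp add: D_def eval_nat_numeral algebra_simps)
  have "cube_shift_term s (n + 3)
      = (-s)^n * (-(s^3)) / (fact n * D)
        * (pochhammer (1/2) n * (Q * c) * (- 3 * sextic_moment (- int n) / c))"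
    unfolding cube_shift_term_def pochhammer fact moment by (simp add: power_add mult.assoc)
  also have "pochhammer (1/2) n * (Q * c) * (- 3 * sextic_moment (- int n) / c)
      = - 3 * pochhammer (1/2) n * Q * sextic_moment (- int n)"
    using \<open>c \<noteq> 0\<close> by simp
  also have "(-s)^n * (-(s^3)) / (fact n * D)
        * (- 3 * pochhammer (1/2) n * Q * sextic_moment (- int n))
      = cube_shift_term s n * (s^3 * (3 * Q / D))"
    using \<open>D \<noteq> 0\<close> by (simp add: cube_shift_term_def field_simps)
  finally show ?thesis
    by (simp add: cube_shift_ratio_def Q_def D_def mult.assoc)
qed

lemma cube_shift_term_0: "cube_shift_term s 0 = Gamma (1/6) / 3"
  by (simp add: cube_shift_term_def sextic_moment_def)

lemma cube_shift_term_1: "cube_shift_term s 1 = s * Gamma (5/6)"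
proof -
  have "sextic_moment (-1) = - 6 * sextic_moment 2"
    using sextic_moment_rec[of "-1"] by simp
  then show ?thesis
    by (simp add: cube_shift_term_def sextic_moment_def)
qed

lemma cube_shift_term_2: "cube_shift_term s 2 = - (s^2 * sqrt pi / 4)"
proof -
  have "sextic_moment (-2) = - 2 * sextic_moment 1"
    using sextic_moment_rec[of "-2"] by simp
  then show ?thesis
    by (simp add: cube_shift_term_def sextic_moment_def Gamma_one_half_real pochhammer_Suc
                  eval_nat_numeral)
qed

section \<open>Splitting the series into three 2F2 series\<close>

definition hyp2F2_term :: "real \<Rightarrow> real \<Rightarrow> real \<Rightarrow> real \<Rightarrow> real \<Rightarrow> nat \<Rightarrow> real" where
  "hyp2F2_term a1 a2 b1 b2 z n =
     pochhammer a1 n * pochhammer a2 n / (pochhammer b1 n * pochhammer b2 n) * z ^ n / fact n"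

definition hyp2F2_ratio :: "real \<Rightarrow> real \<Rightarrow> real \<Rightarrow> real \<Rightarrow> nat \<Rightarrow> real" where
  "hyp2F2_ratio a1 a2 b1 b2 n = (a1 + n) * (a2 + n) / ((b1 + n) * (b2 + n) * (n + 1))"

lemma hyp2F2_eq_suminf: "hyp2F2 a1 a2 b1 b2 z = (\<Sum>n. hyp2F2_term a1 a2 b1 b2 z n)"
  by (simp add: hyp2F2_def hyp2F2_term_def)

lemma hyp2F2_term_0 [simp]: "hyp2F2_term a1 a2 b1 b2 z 0 = 1"
  by (simp add: hyp2F2_term_def)

(* No side conditions are needed: if b1 + n or b2 + n vanishes, both sides are 0 as x / 0 = 0. *)
lemma hyp2F2_term_Suc:
  "hyp2F2_term a1 a2 b1 b2 z (Suc n) = hyp2F2_term a1 a2 b1 b2 z n * (z * hyp2F2_ratio a1 a2 b1 b2 n)"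
  by (simp add: hyp2F2_term_def hyp2F2_ratio_def pochhammer_Suc divide_inverse
                inverse_mult_distrib ac_simps)

lemma cube_shift_term_residue:
  assumes "\<And>m. cube_shift_ratio (real (3 * m + r)) = hyp2F2_ratio a1 a2 b1 b2 m"
  shows "cube_shift_term s (3 * m + r) = cube_shift_term s r * hyp2F2_term a1 a2 b1 b2 (s^3) m"
proof (induction m)
  case (Suc m)
  have "cube_shift_term s (3 * Suc m + r) = cube_shift_term s (3 * m + r + 3)"
    by (simp add: algebra_simps)
  also have "\<dots> = cube_shift_term s r * hyp2F2_term a1 a2 b1 b2 (s^3) (Suc m)"
    using assms[of m]
    by (simp only: cube_shift_term_add_3 Suc.IH hyp2F2_term_Suc mult.assoc)
  finally show ?case .
qed simp

lemma sums_split_mod_3: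
  fixes f :: "nat \<Rightarrow> 'a::real_normed_vector"
  assumes "f sums S" "\<And>r. summable (\<lambda>m. f (3 * m + r))"
  shows "S = (\<Sum>m. f (3 * m)) + (\<Sum>m. f (3 * m + 1)) + (\<Sum>m. f (3 * m + 2))"
proof -
  have "(\<lambda>m. \<Sum>n\<in>{m * 3..<m * 3 + 3}. f n) sums S"
    using sums_group[OF assms(1), of 3] by simp
  moreover have "(\<Sum>n\<in>{m * 3..<m * 3 + 3}. f n) = f (3 * m) + f (3 * m + 1) + f (3 * m + 2)" for m
    by (simp add: numeral_3_eq_3 mult.commute add.assoc)
  moreover have "(\<lambda>m. f (3 * m) + f (3 * m + 1) + f (3 * m + 2))
      sums ((\<Sum>m. f (3 * m)) + (\<Sum>m. f (3 * m + 1)) + (\<Sum>m. f (3 * m + 2)))"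
    using assms(2)[of 0] assms(2)[of 1] assms(2)[of 2]
    by (intro sums_add summable_sums) simp_all
  ultimately show ?thesis
    by (simp add: sums_unique2)
qed

lemma cube_shift_ratio_eq:
  "cube_shift_ratio (real (3 * m + r))
     = (m + (2 * r + 1) / 6) * (m + (2 * r + 3) / 6)
       / ((m + (r + 1) / 3) * (m + (r + 2) / 3) * (m + (r + 3) / 3))"
proof -
  have num: "3 * (real (3 * m + r) + 1/2) * (real (3 * m + r) + 3/2)
      = 27 * ((m + (2 * r + 1) / 6) * (m + (2 * r + 3) / 6))"
    by (simp add: field_simps)
  have den: "(real (3 * m + r) + 1) * (real (3 * m + r) + 2) * (real (3 * m + r) + 3)
      = 27 * ((m + (r + 1) / 3) * (m + (r + 2) / 3) * (m + (r + 3) / 3))"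
    by (simp add: field_simps)
  show ?thesis
    unfolding cube_shift_ratio_def num den by (simp add: add.commute)
qed

lemma suminf_cube_shift_term_residue:
  assumes "\<And>m. hyp2F2_ratio a1 a2 b1 b2 m
    = (m + (2 * r + 1) / 6) * (m + (2 * r + 3) / 6)
      / ((m + (r + 1) / 3) * (m + (r + 2) / 3) * (m + (r + 3) / 3))"
  shows "(\<Sum>m. cube_shift_term s (3 * m + r)) = cube_shift_term s r * hyp2F2 a1 a2 b1 b2 (s^3)"
proof -
  have "cube_shift_ratio (real (3 * m + r)) = hyp2F2_ratio a1 a2 b1 b2 m" for m
    by (simp only: cube_shift_ratio_eq assms)
  then have terms: "(\<lambda>m. cube_shift_term s (3 * m + r))
      = (\<lambda>m. cube_shift_term s r * hyp2F2_term a1 a2 b1 b2 (s^3) m)"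
    using cube_shift_term_residue by blast
  show ?thesis
  proof (cases "cube_shift_term s r = 0")
    case False
    then have "summable (hyp2F2_term a1 a2 b1 b2 (s^3))"
      using summable_cube_shift_term_residue[of s r] by (simp add: terms)
    then show ?thesis
      by (simp add: terms hyp2F2_eq_suminf suminf_mult)
  qed (simp add: terms)
qed

lemma integral_exp_neg_cube_shift:
  fixes s :: real
  shows "(LBINT x. exp (-((x^2 - s)^3)))
    = Gamma (1/6) / 3 * hyp2F2 (1/6) (1/2) (1/3) (2/3) (s^3)
      + s * Gamma (5/6) * hyp2F2 (1/2) (5/6) (2/3) (4/3) (s^3)
      - s^2 * sqrt pi / 4 * hyp2F2 (5/6) (7/6) (4/3) (5/3) (s^3)"
proof -
  have "(LBINT x. exp (-((x^2 - s)^3)))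
      = (\<Sum>m. cube_shift_term s (3 * m)) + (\<Sum>m. cube_shift_term s (3 * m + 1))
        + (\<Sum>m. cube_shift_term s (3 * m + 2))"
    by (rule sums_split_mod_3[OF sums_cube_shift_term summable_cube_shift_term_residue])
  also have "(\<Sum>m. cube_shift_term s (3 * m)) = Gamma (1/6) / 3 * hyp2F2 (1/6) (1/2) (1/3) (2/3) (s^3)"
    using suminf_cube_shift_term_residue[of "1/6" "1/2" "1/3" "2/3" 0] cube_shift_term_0
    by (simp add: hyp2F2_ratio_def ac_simps)
  also have "(\<Sum>m. cube_shift_term s (3 * m + 1))
      = s * Gamma (5/6) * hyp2F2 (1/2) (5/6) (2/3) (4/3) (s^3)"
    using suminf_cube_shift_term_residue[of "1/2" "5/6" "2/3" "4/3" 1] cube_shift_term_1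
    by (simp add: hyp2F2_ratio_def ac_simps)
  also have "(\<Sum>m. cube_shift_term s (3 * m + 2))
      = - (s^2 * sqrt pi / 4) * hyp2F2 (5/6) (7/6) (4/3) (5/3) (s^3)"
    using suminf_cube_shift_term_residue[of "5/6" "7/6" "4/3" "5/3" 2] cube_shift_term_2
    by (simp add: hyp2F2_ratio_def ac_simps)
  finally show ?thesis
    by simp
qed

lemma integral_exp_neg_sextic_complete_cube:
  fixes \<tau> :: real
  shows "(LBINT x. exp (- (x ^ 6 - \<tau> * x ^ 4 + (1/3) * \<tau>\<^sup>2 * x\<^sup>2)))
    = exp (-((\<tau> / 3)^3)) * (LBINT x. exp (-((x^2 - \<tau> / 3)^3)))"
proof -
  have "x ^ 6 - \<tau> * x ^ 4 + (1/3) * \<tau>\<^sup>2 * x\<^sup>2 = (\<tau> / 3)^3 + (x^2 - \<tau> / 3)^3" for x :: real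
    by (simp add: field_simps power2_eq_square power3_eq_cube eval_nat_numeral)
  then have "exp (- (x ^ 6 - \<tau> * x ^ 4 + (1/3) * \<tau>\<^sup>2 * x\<^sup>2))
      = exp (-((\<tau> / 3)^3)) * exp (-((x^2 - \<tau> / 3)^3))" for x :: real
    by (simp add: mult_exp_exp)
  then show ?thesis
    by simp
qed

theorem lemma6p2:
  fixes \<tau> :: real
  shows "(LBINT x. exp (- (x ^ 6 - \<tau> * x ^ 4 + (1/3) * \<tau>\<^sup>2 * x\<^sup>2))) =
    ((1/3) * Gamma (1/6) * hyp2F2 (1/6) (1/2) (1/3) (2/3) (\<tau> ^ 3 / 27)
     + (1/3) * \<tau> * Gamma (5/6) * hyp2F2 (1/2) (5/6) (2/3) (4/3) (\<tau> ^ 3 / 27)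
     - \<tau>\<^sup>2 * sqrt pi / 36 * hyp2F2 (5/6) (7/6) (4/3) (5/3) (\<tau> ^ 3 / 27))
    * exp (- (\<tau> ^ 3 / 27))"
  unfolding integral_exp_neg_sextic_complete_cube integral_exp_neg_cube_shift
  by (simp add: power_divide algebra_simps)

end
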